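(* A finite group is pseudo-nilpotent if and only if it is nilpotent.
   Context: For a semigroup $S$, $S^1$ denotes $S$ with an identity adjoined (if $S$ has none). For $x,y\in S$ and $z_1,z_2,\ldots\in S^1$ define recursively $\lambda_0=x$, $\rho_0=y$, $\lambda_{n+1}=\lambda_n z_{n+1}\rho_n$, $\rho_{n+1}=\rho_n z_{n+1}\lambda_n$; write $\lambda_n(x,y,z_1,\ldots,z_n)$ and $\rho_n(x,y,z_1,\ldots,z_n)$. A semigroup $S$ is nilpotent (in the sense of Mal'cev) if there is a positive integer $n$ with $\lambda_n(a,b,c_1,\ldots,c_n)=\rho_n(a,b,c_1,\ldots,c_n)$ for all $a,b\in S$ and $c_1,\ldots,c_n\in S^1$ (for groups this coincides with the usual notion of nilpotency). $\langle X\rangle$ denotes the subsemigroup generated by $X$. The upper non-nilpotent graph $\mathcal{N}_S$ has vertex set $S$, with an edge between $x$ and $y$ iff $\langle x,y\rangle$ is not nilpotent. The empty set is regarded as an ideal; for an ideal $I$ of $S$, $S/I$ is the Rees factor semigroup, with $S/\emptyset=S$. A semigroup $S$ is pseudo-nilpotent if the following holds: whenever $x,y\in S$, $w_1,\ldots,w_m\in S^1$, $T$ is the subsemigroup generated by $x,y$ and those $w_i$ lying in $S$, $I$ is an ideal (possibly empty) of $T$, and $t<m$ are non-negative integers such that, writing $\lambda_k=\lambda_k(x,y,w_1,\ldots,w_k)$ and $\rho_k=\rho_k(x,y,w_1,\ldots,w_k)$, one has $\lambda_t\neq\rho_t$, $(\lambda_t,\rho_t)=(\lambda_m,\rho_m)$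 and $\lambda_m,\rho_m\notin I$, then for every $0\le i\le m$ there is an edge in $\mathcal{N}_{T/I}$ between (the images of) $\lambda_i$ and $\rho_i$. *)

theory Defs
  imports "HOL-Algebra.Group"
begin

text \<open>A semigroup is given by a carrier set S and a binary operation f.
  Elements of S^1 are represented as 'a option: None is the (adjoined) identity,
  Some s is s. Multiplying by None does nothing.\<close>

definition mult1 :: "('a \<Rightarrow> 'a \<Rightarrow> 'a) \<Rightarrow> 'a \<Rightarrow> 'a option \<Rightarrow> 'a" where
  "mult1 f x z = (case z of None \<Rightarrow> x | Some w \<Rightarrow> f x w)"

definition one_ext :: "'a set \<Rightarrow> 'a option set" where
  "one_ext S = insert None (Some ` S)"

fun lr :: "('a \<Rightarrow> 'a \<Rightarrow> 'a) \<Rightarrow> 'a \<Rightarrow> 'a \<Rightarrow> (nat \<Rightarrow> 'a option) \<Rightarrow> nat \<Rightarrow> 'a \<times> 'a" where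
  "lr f x y z 0 = (x, y)"
| "lr f x y z (Suc n) =
     (let (l, r) = lr f x y z n
      in (f (mult1 f l (z (Suc n))) r, f (mult1 f r (z (Suc n))) l))"

definition lam :: "('a \<Rightarrow> 'a \<Rightarrow> 'a) \<Rightarrow> 'a \<Rightarrow> 'a \<Rightarrow> (nat \<Rightarrow> 'a option) \<Rightarrow> nat \<Rightarrow> 'a" where
  "lam f x y z n = fst (lr f x y z n)"

definition rho :: "('a \<Rightarrow> 'a \<Rightarrow> 'a) \<Rightarrow> 'a \<Rightarrow> 'a \<Rightarrow> (nat \<Rightarrow> 'a option) \<Rightarrow> nat \<Rightarrow> 'a" where
  "rho f x y z n = snd (lr f x y z n)"

definition malcev_nilpotent :: "'a set \<Rightarrow> ('a \<Rightarrow> 'a \<Rightarrow> 'a) \<Rightarrow> bool" where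
  "malcev_nilpotent S f \<longleftrightarrow>
     (\<exists>n>0. \<forall>a\<in>S. \<forall>b\<in>S. \<forall>c. (\<forall>i\<in>{1..n}. c i \<in> one_ext S) \<longrightarrow>
        lam f a b c n = rho f a b c n)"

inductive_set gen :: "('a \<Rightarrow> 'a \<Rightarrow> 'a) \<Rightarrow> 'a set \<Rightarrow> 'a set" for f X where
  base: "x \<in> X \<Longrightarrow> x \<in> gen f X"
| mult: "a \<in> gen f X \<Longrightarrow> b \<in> gen f X \<Longrightarrow> f a b \<in> gen f X"

definition sg_ideal :: "('a \<Rightarrow> 'a \<Rightarrow> 'a) \<Rightarrow> 'a set \<Rightarrow> 'a set \<Rightarrow> bool" where
  "sg_ideal f T I \<longleftrightarrow> I \<subseteq> T \<and> (\<forall>a\<in>I. \<forall>t\<in>T. f a t \<in> I \<and> f t a \<in> I)"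

text \<open>Rees factor semigroup T/I on 'a option: Some a for a in T - I,
  None is the zero (present only when I is nonempty, so T/{} = T).\<close>
definition rees_carrier :: "'a set \<Rightarrow> 'a set \<Rightarrow> 'a option set" where
  "rees_carrier T I = Some ` (T - I) \<union> (if I = {} then {} else {None})"

fun rees_mult :: "('a \<Rightarrow> 'a \<Rightarrow> 'a) \<Rightarrow> 'a set \<Rightarrow> 'a option \<Rightarrow> 'a option \<Rightarrow> 'a option" where
  "rees_mult f I (Some a) (Some b) = (if f a b \<in> I then None else Some (f a b))"
| "rees_mult f I _ _ = None"

definition rees_img :: "'a set \<Rightarrow> 'a \<Rightarrow> 'a option" where
  "rees_img I x = (if x \<in> I then None else Some x)"

definition nn_edge :: "'a set \<Rightarrow> ('a \<Rightarrow> 'a \<Rightarrow> 'a) \<Rightarrow> 'a \<Rightarrow> 'a \<Rightarrow> bool" where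
  "nn_edge S f u v \<longleftrightarrow> u \<in> S \<and> v \<in> S \<and> \<not> malcev_nilpotent (gen f {u, v}) f"

definition pseudo_nilpotent :: "'a set \<Rightarrow> ('a \<Rightarrow> 'a \<Rightarrow> 'a) \<Rightarrow> bool" where
  "pseudo_nilpotent S f \<longleftrightarrow>
    (\<forall>x\<in>S. \<forall>y\<in>S. \<forall>m. \<forall>w. (\<forall>i\<in>{1..m}. w i \<in> one_ext S) \<longrightarrow>
      (let T = gen f ({x, y} \<union> {a. \<exists>i\<in>{1..m}. w i = Some a}) in
       \<forall>I t. sg_ideal f T I \<longrightarrow> t < m \<longrightarrow>
         lam f x y w t \<noteq> rho f x y w t \<longrightarrow>
         lam f x y w t = lam f x y w m \<longrightarrow> rho f x y w t = rho f x y w m \<longrightarrow>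
         lam f x y w m \<notin> I \<longrightarrow> rho f x y w m \<notin> I \<longrightarrow>
         (\<forall>i\<le>m. nn_edge (rees_carrier T I) (rees_mult f I)
                    (rees_img I (lam f x y w i)) (rees_img I (rho f x y w i)))))"

end

theory Submission
  imports Defs
begin

text \<open>Call \<open>t < m\<close> a cycle of the sequence \<open>(\<lambda>\<^sub>k, \<rho>\<^sub>k)\<close> if \<open>(\<lambda>\<^sub>t, \<rho>\<^sub>t) = (\<lambda>\<^sub>m, \<rho>\<^sub>m)\<close>
  and \<open>\<lambda>\<^sub>t \<noteq> \<rho>\<^sub>t\<close>. Repeating the words \<open>z\<^sub>t\<^sub>+\<^sub>1, \<dots>, z\<^sub>m\<close> forever keeps the sequence on the
  cycle, so a Mal'cev nilpotent semigroup has no cycles and the hypothesis of pseudo-nilpotency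
  is never met. Conversely a finite semigroup that is not nilpotent has a cycle by the pigeonhole
  principle. In a group, multiplying the whole sequence on the right by \<open>b\<^sup>-\<^sup>1\<close> (and the words
  on the left by \<open>b\<close>) moves a cycle starting at \<open>(a, b)\<close> to one starting at \<open>(a b\<^sup>-\<^sup>1, 1)\<close>;
  pseudo-nilpotency then demands an edge between \<open>a b\<^sup>-\<^sup>1\<close> and \<open>1\<close>, but they generate a
  commutative, hence nilpotent, subsemigroup.\<close>

lemma lr_eq_lam_rho: "lr f x y z n = (lam f x y z n, rho f x y z n)"
  by (simp add: lam_def rho_def)

lemma lam_Suc: "lam f x y z (Suc n) = f (mult1 f (lam f x y z n) (z (Suc n))) (rho f x y z n)"
  by (simp add: lam_def rho_def split: prod.split)

lemma rho_Suc: "rho f x y z (Suc n) = f (mult1 f (rho f x y z n) (z (Suc n))) (lam f x y z n)"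
  by (simp add: lam_def rho_def split: prod.split)

lemma lam_eq_rho_mono:
  assumes "lam f x y z k = rho f x y z k" and "k \<le> j"
  shows "lam f x y z j = rho f x y z j"
  using assms(2,1) by (induction j rule: dec_induct) (simp_all add: lam_Suc rho_Suc)

lemma mult1_closed:
  assumes "\<And>a b. a \<in> S \<Longrightarrow> b \<in> S \<Longrightarrow> f a b \<in> S" and "a \<in> S" and "c \<in> one_ext S"
  shows "mult1 f a c \<in> S"
  using assms by (auto simp: mult1_def one_ext_def)

lemma lam_rho_closed:
  assumes closed: "\<And>a b. a \<in> S \<Longrightarrow> b \<in> S \<Longrightarrow> f a b \<in> S"
    and "x \<in> S" and "y \<in> S" and z: "\<forall>i\<in>{1..n}. z i \<in> one_ext S" and "k \<le> n"
  shows "lam f x y z k \<in> S \<and> rho f x y z k \<in> S"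
  using \<open>k \<le> n\<close>
proof (induction k)
  case 0
  then show ?case using assms by (simp add: lam_def rho_def)
next
  case (Suc k)
  then have "z (Suc k) \<in> one_ext S" using z by simp
  with Suc show ?case by (simp add: lam_Suc rho_Suc closed mult1_closed[OF closed])
qed

definition lr_cycle :: "('a \<Rightarrow> 'a \<Rightarrow> 'a) \<Rightarrow> 'a \<Rightarrow> 'a \<Rightarrow> (nat \<Rightarrow> 'a option) \<Rightarrow> nat \<Rightarrow> nat \<Rightarrow> bool"
  where "lr_cycle f x y z t m \<longleftrightarrow>
    t < m \<and> lam f x y z t \<noteq> rho f x y z t \<and> lr f x y z t = lr f x y z m"

text \<open>The index sequence \<open>0, 1, \<dots>, m - 1, t, \<dots>, m - 1, t, \<dots>\<close>.\<close>

definition cycle_index :: "nat \<Rightarrow> nat \<Rightarrow> nat \<Rightarrow> nat" where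
  "cycle_index t m j = (if j < m then j else t + (j - t) mod (m - t))"

lemma cycle_index_less:
  assumes "t < m"
  shows "cycle_index t m j < m"
proof -
  have "(j - t) mod (m - t) < m - t" using assms by simp
  then show ?thesis by (simp add: cycle_index_def) linarith
qed

lemma cycle_index_Suc:
  assumes "t < m"
  shows "cycle_index t m (Suc j) =
    (if Suc (cycle_index t m j) = m then t else Suc (cycle_index t m j))"
proof (cases "m \<le> j")
  case True
  define r where "r = (j - t) mod (m - t)"
  have "r < m - t" using assms by (simp add: r_def)
  moreover have "cycle_index t m j = t + r"
    using True unfolding cycle_index_def r_def by simp
  moreover have "cycle_index t m (Suc j) = t + (if Suc r = m - t then 0 else Suc r)"
    using True assms mod_Suc[of "j - t" "m - t"] unfolding cycle_index_def r_def
    by (simp add: Suc_diff_le)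
  ultimately show ?thesis using assms by auto
next
  case False
  then show ?thesis using assms unfolding cycle_index_def by auto
qed

lemma lr_unroll_cycle:
  assumes "t < m" and "lr f x y z t = lr f x y z m"
  shows "lr f x y (\<lambda>j. z (Suc (cycle_index t m (j - 1)))) j = lr f x y z (cycle_index t m j)"
proof (induction j)
  case 0
  then show ?case using assms by (simp add: cycle_index_def)
next
  case (Suc j)
  have "lr f x y (\<lambda>j. z (Suc (cycle_index t m (j - 1)))) (Suc j) =
      lr f x y z (Suc (cycle_index t m j))"
    using Suc.IH by simp
  also have "\<dots> = lr f x y z (cycle_index t m (Suc j))"
    using assms by (cases "Suc (cycle_index t m j) = m") (simp_all add: cycle_index_Suc)
  finally show ?case .
qed

lemma malcev_nilpotent_no_cycle:
  assumes nil: "malcev_nilpotent S f" and "x \<in> S" and "y \<in> S"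
    and z: "\<forall>i\<in>{1..m}. z i \<in> one_ext S"
  shows "\<not> lr_cycle f x y z t m"
proof
  assume "lr_cycle f x y z t m"
  then have tm: "t < m" and ne: "lam f x y z t \<noteq> rho f x y z t"
    and eq: "lr f x y z t = lr f x y z m"
    by (simp_all add: lr_cycle_def)
  define z' where "z' = (\<lambda>j. z (Suc (cycle_index t m (j - 1))))"
  have z': "z' i \<in> one_ext S" for i
  proof -
    have "Suc (cycle_index t m (i - 1)) \<in> {1..m}"
      using cycle_index_less[OF tm] by (simp add: Suc_le_eq)
    then show ?thesis using z by (simp add: z'_def)
  qed
  obtain N where "\<forall>a\<in>S. \<forall>b\<in>S. \<forall>c. (\<forall>i\<in>{1..N}. c i \<in> one_ext S) \<longrightarrow>
      lam f a b c N = rho f a b c N"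
    using nil unfolding malcev_nilpotent_def by blast
  then have "lam f x y z' N = rho f x y z' N"
    using z' \<open>x \<in> S\<close> \<open>y \<in> S\<close> by blast
  moreover have "lr f x y z' N = lr f x y z (cycle_index t m N)"
    unfolding z'_def by (rule lr_unroll_cycle[OF tm eq])
  ultimately have "lam f x y z (cycle_index t m N) = rho f x y z (cycle_index t m N)"
    unfolding lam_def rho_def by simp
  then have "lam f x y z m = rho f x y z m"
    by (rule lam_eq_rho_mono) (rule less_imp_le[OF cycle_index_less[OF tm]])
  moreover have "lam f x y z t = lam f x y z m" "rho f x y z t = rho f x y z m"
    using eq by (simp_all add: lr_eq_lam_rho)
  ultimately show False using ne by simp
qed

lemma malcev_nilpotent_imp_pseudo_nilpotent:
  assumes "malcev_nilpotent S f"
  shows "pseudo_nilpotent S f"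
  unfolding pseudo_nilpotent_def Let_def
proof (intro ballI allI impI)
  fix x y m w I t i
  assume "x \<in> S" "y \<in> S" "\<forall>i\<in>{1..m}. w i \<in> one_ext S" "t < m"
    "lam f x y w t \<noteq> rho f x y w t"
    "lam f x y w t = lam f x y w m" "rho f x y w t = rho f x y w m"
  then have "lr_cycle f x y w t m"
    by (simp add: lr_cycle_def lr_eq_lam_rho)
  with malcev_nilpotent_no_cycle[OF assms] \<open>x \<in> S\<close> \<open>y \<in> S\<close>
    \<open>\<forall>i\<in>{1..m}. w i \<in> one_ext S\<close>
  show "nn_edge (rees_carrier (gen f ({x, y} \<union> {a. \<exists>i\<in>{1..m}. w i = Some a})) I)
      (rees_mult f I) (rees_img I (lam f x y w i)) (rees_img I (rho f x y w i))"
    by blast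
qed

lemma finite_not_malcev_nilpotent_cycle:
  assumes "finite S" and closed: "\<And>a b. a \<in> S \<Longrightarrow> b \<in> S \<Longrightarrow> f a b \<in> S"
    and "\<not> malcev_nilpotent S f"
  obtains x y z t m where "x \<in> S" "y \<in> S" "\<forall>i\<in>{1..m}. z i \<in> one_ext S"
    "lr_cycle f x y z t m"
proof -
  define n where "n = Suc (card (S \<times> S))"
  obtain x y z where xy: "x \<in> S" "y \<in> S" and z: "\<forall>i\<in>{1..n}. z i \<in> one_ext S"
    and ne: "lam f x y z n \<noteq> rho f x y z n"
    using assms(3) unfolding malcev_nilpotent_def n_def by blast
  have "lr f x y z ` {0..n} \<subseteq> S \<times> S"
    using lam_rho_closed[OF closed xy z] by (auto simp: lr_eq_lam_rho)
  then have "card (lr f x y z ` {0..n}) \<le> card (S \<times> S)"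
    using \<open>finite S\<close> by (metis card_mono finite_SigmaI)
  then have "card (lr f x y z ` {0..n}) < card {0..n}"
    by (simp add: n_def)
  then have "\<not> inj_on (lr f x y z) {0..n}"
    by (rule pigeonhole)
  then obtain i j where "i \<le> n" "j \<le> n" "i \<noteq> j" "lr f x y z i = lr f x y z j"
    unfolding inj_on_def by auto
  moreover define t m where "t = min i j" and "m = max i j"
  ultimately have tm: "t < m" "m \<le> n" and eq: "lr f x y z t = lr f x y z m"
    by (auto simp: min_def max_def)
  have "lam f x y z t \<noteq> rho f x y z t"
  proof
    assume "lam f x y z t = rho f x y z t"
    then have "lam f x y z n = rho f x y z n"
      by (rule lam_eq_rho_mono) (use tm in simp)
    with ne show False by contradiction
  qed
  moreover have "\<forall>i\<in>{1..m}. z i \<in> one_ext S" using z tm by auto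
  ultimately show ?thesis using that xy tm eq by (simp add: lr_cycle_def)
qed

lemma pseudo_nilpotent_cycle_not_nilpotent:
  assumes "pseudo_nilpotent S f" and "x \<in> S" and "y \<in> S"
    and "\<forall>i\<in>{1..m}. z i \<in> one_ext S" and "lr_cycle f x y z t m"
  shows "\<not> malcev_nilpotent (gen (rees_mult f {}) {Some x, Some y}) (rees_mult f {})"
proof -
  have "nn_edge (rees_carrier (gen f ({x, y} \<union> {a. \<exists>i\<in>{1..m}. z i = Some a})) {}) (rees_mult f {})
      (rees_img {} (lam f x y z 0)) (rees_img {} (rho f x y z 0))"
    using assms unfolding pseudo_nilpotent_def Let_def lr_cycle_def lr_eq_lam_rho
    by (auto simp: sg_ideal_def)
  then show ?thesis by (simp add: nn_edge_def rees_img_def lam_def rho_def)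
qed

lemma commutative_imp_malcev_nilpotent:
  assumes assoc: "\<And>a b c. a \<in> S \<Longrightarrow> b \<in> S \<Longrightarrow> c \<in> S \<Longrightarrow> f (f a b) c = f a (f b c)"
    and comm: "\<And>a b. a \<in> S \<Longrightarrow> b \<in> S \<Longrightarrow> f a b = f b a"
  shows "malcev_nilpotent S f"
  unfolding malcev_nilpotent_def
proof (intro exI[of _ 1] conjI ballI allI impI)
  fix a b and c :: "nat \<Rightarrow> 'a option"
  assume a: "a \<in> S" and b: "b \<in> S" and "\<forall>i\<in>{1..1}. c i \<in> one_ext S"
  then have "c 1 \<in> one_ext S" by simp
  moreover have "f (f a w) b = f (f b w) a" if "w \<in> S" for w
  proof -
    have "f (f a w) b = f a (f b w)" using a b that by (simp add: assoc comm)
    also have "\<dots> = f (f b w) a" using a b that by (metis assoc comm)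
    finally show ?thesis .
  qed
  ultimately show "lam f a b c 1 = rho f a b c 1"
    using a b comm by (auto simp: lam_def rho_def mult1_def one_ext_def)
qed simp

definition ext_val :: "('a, 'b) monoid_scheme \<Rightarrow> 'a option \<Rightarrow> 'a" where
  "ext_val G = case_option \<one>\<^bsub>G\<^esub> id"

context group
begin

lemma ext_val_closed: "c \<in> one_ext (carrier G) \<Longrightarrow> ext_val G c \<in> carrier G"
  by (auto simp: ext_val_def one_ext_def)

lemma mult1_ext_val:
  "a \<in> carrier G \<Longrightarrow> c \<in> one_ext (carrier G) \<Longrightarrow> mult1 (\<otimes>) a c = a \<otimes> ext_val G c"
  by (auto simp: mult1_def ext_val_def one_ext_def)

lemma lr_right_translate:
  assumes a: "a \<in> carrier G" and b: "b \<in> carrier G" and g: "g \<in> carrier G"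
    and c: "\<forall>i\<in>{1..n}. c i \<in> one_ext (carrier G)" and "k \<le> n"
  shows "lr (\<otimes>) (a \<otimes> g) (b \<otimes> g) (\<lambda>i. Some (inv g \<otimes> ext_val G (c i))) k =
    (lam (\<otimes>) a b c k \<otimes> g, rho (\<otimes>) a b c k \<otimes> g)"
  using \<open>k \<le> n\<close>
proof (induction k)
  case 0
  then show ?case by (simp add: lam_def rho_def)
next
  case (Suc k)
  let ?l = "lam (\<otimes>) a b c k" and ?r = "rho (\<otimes>) a b c k" and ?c = "ext_val G (c (Suc k))"
  have l: "?l \<in> carrier G" and r: "?r \<in> carrier G"
    using lam_rho_closed[OF m_closed a b c Suc_leD[OF Suc.prems]] by simp_all
  have "c (Suc k) \<in> one_ext (carrier G)" using c Suc.prems by simp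
  then have "mult1 (\<otimes>) ?l (c (Suc k)) = ?l \<otimes> ?c" "mult1 (\<otimes>) ?r (c (Suc k)) = ?r \<otimes> ?c"
    and "?c \<in> carrier G"
    using l r by (simp_all add: mult1_ext_val ext_val_closed)
  moreover have "g \<otimes> (inv g \<otimes> h) = h" if "h \<in> carrier G" for h
    using g that by (simp add: m_assoc[symmetric])
  ultimately show ?case
    using Suc l r g by (simp add: lam_Suc rho_Suc lr_eq_lam_rho mult1_def m_assoc)
qed

lemma lr_cycle_right_translate:
  assumes "a \<in> carrier G" "b \<in> carrier G" "g \<in> carrier G"
    and "\<forall>i\<in>{1..m}. c i \<in> one_ext (carrier G)" and "lr_cycle (\<otimes>) a b c t m"
  shows "lr_cycle (\<otimes>) (a \<otimes> g) (b \<otimes> g) (\<lambda>i. Some (inv g \<otimes> ext_val G (c i))) t m"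
proof -
  have "lam (\<otimes>) a b c k \<in> carrier G \<and> rho (\<otimes>) a b c k \<in> carrier G" if "k \<le> m" for k
    using lam_rho_closed[OF m_closed assms(1,2,4) that] .
  then show ?thesis
    using assms lr_right_translate[OF assms(1-4)]
    by (auto simp: lr_cycle_def lr_eq_lam_rho)
qed

lemma gen_pow_one:
  assumes "x \<in> carrier G" and "u \<in> gen (rees_mult (\<otimes>) {}) {Some x, Some \<one>}"
  obtains k :: nat where "u = Some (x [^] k)"
  using assms(2)
proof (induction arbitrary: thesis rule: gen.induct)
  case (base u)
  then have "u = Some (x [^] (1::nat)) \<or> u = Some (x [^] (0::nat))"
    using assms(1) by auto
  with base.prems show thesis by blast
next
  case (mult a b)
  obtain i j :: nat where "a = Some (x [^] i)" "b = Some (x [^] j)"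
    using mult.IH by metis
  then have "rees_mult (\<otimes>) {} a b = Some (x [^] (i + j))"
    using assms(1) by (simp add: nat_pow_mult)
  with mult.prems show thesis by blast
qed

lemma malcev_nilpotent_gen_pow_one:
  assumes x: "x \<in> carrier G"
  shows "malcev_nilpotent (gen (rees_mult (\<otimes>) {}) {Some x, Some \<one>}) (rees_mult (\<otimes>) {})"
proof (rule commutative_imp_malcev_nilpotent)
  fix a b c
  assume "a \<in> gen (rees_mult (\<otimes>) {}) {Some x, Some \<one>}"
    "b \<in> gen (rees_mult (\<otimes>) {}) {Some x, Some \<one>}"
    "c \<in> gen (rees_mult (\<otimes>) {}) {Some x, Some \<one>}"
  then obtain i j k :: nat where "a = Some (x [^] i)" "b = Some (x [^] j)" "c = Some (x [^] k)"
    using gen_pow_one[OF x] by metis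
  then show "rees_mult (\<otimes>) {} (rees_mult (\<otimes>) {} a b) c = rees_mult (\<otimes>) {} a (rees_mult (\<otimes>) {} b c)"
    and "rees_mult (\<otimes>) {} a b = rees_mult (\<otimes>) {} b a"
    using x by (simp_all add: nat_pow_mult add.commute add.left_commute)
qed

end

lemma finite_group_pseudo_nilpotent_imp_malcev_nilpotent:
  fixes G :: "('a, 'b) monoid_scheme" (structure)
  assumes "group G" and "finite (carrier G)"
    and pn: "pseudo_nilpotent (carrier G) (\<lambda>x y. x \<otimes> y)"
  shows "malcev_nilpotent (carrier G) (\<lambda>x y. x \<otimes> y)"
proof (rule ccontr)
  interpret group G by fact
  assume "\<not> malcev_nilpotent (carrier G) (\<otimes>)"
  from finite_not_malcev_nilpotent_cycle[OF \<open>finite (carrier G)\<close> m_closed this]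
  obtain a b c t m where a: "a \<in> carrier G" and b: "b \<in> carrier G"
    and c: "\<forall>i\<in>{1..m}. c i \<in> one_ext (carrier G)" and cycle: "lr_cycle (\<otimes>) a b c t m"
    .
  define x where "x = a \<otimes> inv b"
  define w where "w = (\<lambda>i. Some (b \<otimes> ext_val G (c i)))"
  have x: "x \<in> carrier G" using a b by (simp add: x_def)
  have "lr_cycle (\<otimes>) (a \<otimes> inv b) (b \<otimes> inv b) (\<lambda>i. Some (inv (inv b) \<otimes> ext_val G (c i))) t m"
    using a b c cycle by (intro lr_cycle_right_translate) simp_all
  then have "lr_cycle (\<otimes>) x \<one> w t m"
    using b by (simp add: x_def w_def)
  moreover have "\<forall>i\<in>{1..m}. w i \<in> one_ext (carrier G)"
    using b c by (simp add: w_def one_ext_def ext_val_closed)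
  ultimately have "\<not> malcev_nilpotent (gen (rees_mult (\<otimes>) {}) {Some x, Some \<one>}) (rees_mult (\<otimes>) {})"
    using pseudo_nilpotent_cycle_not_nilpotent[OF pn x one_closed] by blast
  with malcev_nilpotent_gen_pow_one[OF x] show False by contradiction
qed

theorem lemma2p5:
  fixes G :: "('a, 'b) monoid_scheme" (structure)
  assumes "group G" and "finite (carrier G)"
  shows "pseudo_nilpotent (carrier G) (\<lambda>x y. x \<otimes> y) \<longleftrightarrow>
         malcev_nilpotent (carrier G) (\<lambda>x y. x \<otimes> y)"
  using finite_group_pseudo_nilpotent_imp_malcev_nilpotent[OF assms]
    malcev_nilpotent_imp_pseudo_nilpotent by blast

end
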